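(* Let $A$ be a commutative ring, $a\in A$ a non-zero-divisor, and $\mathcal D=\partial_z-a:A[z]\to A[z]$, $h\mapsto h'-ah$. Let $f=b_0+b_1z+\cdots+b_dz^d\in A[z]$ with $b_0,\ldots,b_d\in A$. (i) If $f\in\mathrm{Im}\,\mathcal D$, then $b_d\equiv 0\pmod{a}$ and $$d!\,b_d+(d-1)!\,b_{d-1}a+(d-2)!\,b_{d-2}a^2+\cdots+0!\,b_0a^d\equiv 0\pmod{a^{d+1}}.$$ (ii) Conversely, suppose $A$ is either a $\mathbb Q$-algebra, or an $\mathbb F_p$-algebra with $d<p$. If $f$ satisfies the congruence $\sum_{j=0}^{d}(d-j)!\,b_{d-j}a^{j}\equiv 0\pmod{a^{d+1}}$, then $f\in\mathrm{Im}\,\mathcal D$.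
   Context: Congruences are in $A$: $x\equiv 0\pmod{a^k}$ means $x\in Aa^k$. *)

theory Defs
  imports "HOL-Computational_Algebra.Polynomial" "HOL-Computational_Algebra.Primes"
begin

text \<open>Formal derivative over an arbitrary commutative ring (the library pderiv needs no zero divisors):
  the derivative of sum c_i z^i is sum i c_i z^(i-1).\<close>
definition fderiv :: "'a::comm_ring_1 poly \<Rightarrow> 'a poly" where
  "fderiv h = (\<Sum>i\<le>degree h. monom (of_nat i * coeff h i) (i - 1))"

definition Dop :: "'a::comm_ring_1 \<Rightarrow> 'a poly \<Rightarrow> 'a poly" where
  "Dop a h = fderiv h - smult a h"

definition Q_algebra :: "'a::comm_ring_1 itself \<Rightarrow> bool" where
  "Q_algebra _ \<longleftrightarrow> (\<exists>\<phi>::rat \<Rightarrow> 'a. \<phi> 1 = 1 \<and> (\<forall>x y. \<phi> (x + y) = \<phi> x + \<phi> y)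
                                   \<and> (\<forall>x y. \<phi> (x * y) = \<phi> x * \<phi> y))"

text \<open>A is an F_p-algebra (p prime): p * 1 = 0 in A, i.e. Z -> A factors through Z/pZ.\<close>
definition Fp_algebra :: "'a::comm_ring_1 itself \<Rightarrow> nat \<Rightarrow> bool" where
  "Fp_algebra _ p \<longleftrightarrow> prime p \<and> (of_nat p :: 'a) = 0"

end

theory Submission
  imports Defs
begin

text \<open>
  Write h = sum h_k z^k and D h = sum ((k+1) h_(k+1) - a h_k) z^k.  Scaling the k-th coefficient
  by k! turns the coefficient equations of D h = f into the first-order recurrence
      c_(k+1) - a c_k = k! b_k,      where  c_k = k! h_k,
  and the whole proposition is a statement about this recurrence:

  (1) Since a is a non-zero-divisor, deg (D h) = deg h; so a preimage of f has degree at most d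
      and its rescaled coefficients satisfy the recurrence with c_(d+1) = 0.
  (2) Telescoping gives  sum_(k<=d) (c_(k+1) - a c_k) a^(d-k) = c_(d+1) - c_0 a^(d+1); hence a
      solution with c_(d+1) = 0 exists if and only if a^(d+1) divides sum_(k<=d) k! b_k a^(d-k),
      which after reversing the summation is the congruence of the proposition.
  (3) Over a Q-algebra, or an F_p-algebra with d < p, the factorials 0!, ..., d! are units, so a
      solution c can be divided back by k! to produce an actual preimage h.
  Part (i) is (1) + (2) (plus a | b_d, the top coefficient of D h); part (ii) is (2) + (3).
\<close>

lemma coeff_fderiv: "coeff (fderiv h) k = of_nat (k + 1) * coeff h (k + 1)"
proof -
  have "coeff (fderiv h) k = (\<Sum>i\<le>degree h. if i = k + 1 then of_nat i * coeff h i else 0)"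
    unfolding fderiv_def coeff_sum coeff_monom
    by (rule sum.cong) (auto split: nat_diff_split)
  also have "\<dots> = of_nat (k + 1) * coeff h (k + 1)"
    by (auto simp: coeff_eq_0)
  finally show ?thesis .
qed

lemma coeff_Dop: "coeff (Dop a h) k = of_nat (k + 1) * coeff h (k + 1) - a * coeff h k"
  by (simp add: Dop_def coeff_fderiv)

lemma fact_scaled_coeff_Dop:
  "of_nat (fact k) * coeff (Dop a h) k
     = of_nat (fact (k + 1)) * coeff h (k + 1) - a * (of_nat (fact k) * coeff h k)"
  by (simp add: coeff_Dop algebra_simps)

text \<open>For a non-zero-divisor a, D preserves degrees: the coefficient of z^(deg h) in D h is
  -a times the leading coefficient of h.\<close>
lemma degree_Dop:
  fixes a :: "'a::comm_ring_1"
  assumes nzd: "\<forall>c. a * c = 0 \<longrightarrow> c = 0"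
  shows "degree (Dop a h) = degree h"
proof (cases "h = 0")
  case True
  then show ?thesis by (simp add: Dop_def fderiv_def)
next
  case False
  have top: "coeff (Dop a h) (degree h) = - (a * lead_coeff h)"
    by (simp add: coeff_Dop coeff_eq_0)
  have "lead_coeff h \<noteq> 0" using False by simp
  then have "coeff (Dop a h) (degree h) \<noteq> 0" using nzd top by auto
  then have "degree h \<le> degree (Dop a h)" by (rule le_degree)
  moreover have "degree (Dop a h) \<le> degree h"
    by (rule degree_le) (simp add: coeff_Dop coeff_eq_0)
  ultimately show ?thesis by simp
qed

lemma telescope_recurrence:
  fixes a :: "'a::comm_ring_1"
  shows "(\<Sum>k\<le>d. (c (Suc k) - a * c k) * a ^ (d - k)) = c (Suc d) - c 0 * a ^ Suc d"
proof (induction d)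
  case 0
  then show ?case by simp
next
  case (Suc d)
  have "(\<Sum>k\<le>Suc d. (c (Suc k) - a * c k) * a ^ (Suc d - k))
      = (\<Sum>k\<le>d. a * ((c (Suc k) - a * c k) * a ^ (d - k))) + (c (Suc (Suc d)) - a * c (Suc d))"
    by (simp add: Suc_diff_le mult_ac)
  also have "\<dots> = a * (c (Suc d) - c 0 * a ^ Suc d) + (c (Suc (Suc d)) - a * c (Suc d))"
    by (simp only: sum_distrib_left[symmetric] Suc.IH)
  finally show ?case by (simp add: algebra_simps)
qed

lemma power_mult_cancel:
  fixes a :: "'a::comm_ring_1"
  assumes nzd: "\<forall>c. a * c = 0 \<longrightarrow> c = 0" and eq: "a ^ n * x = a ^ n * y"
  shows "x = y"
  using eq
proof (induction n)
  case 0
  then show ?case by simp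
next
  case (Suc n)
  then have "a * (a ^ n * x - a ^ n * y) = 0" by (simp add: algebra_simps)
  then show ?case using nzd Suc.IH by auto
qed

text \<open>Conversely, divisibility allows one to solve the recurrence with terminal value 0; the solution
  is built from the bottom, peeling off the term w_0 a^d.\<close>
lemma dvd_imp_recurrence:
  fixes a :: "'a::comm_ring_1"
  assumes nzd: "\<forall>c. a * c = 0 \<longrightarrow> c = 0"
    and "a ^ Suc d dvd (\<Sum>k\<le>d. w k * a ^ (d - k))"
  shows "\<exists>c. c (Suc d) = 0 \<and> (\<forall>k\<le>d. c (Suc k) - a * c k = w k)"
  using assms(2)
proof (induction d arbitrary: w)
  case 0
  then obtain q where "w 0 = a * q" by auto
  then show ?case by (intro exI[of _ "\<lambda>k. if k = 0 then - q else 0"]) simp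
next
  case (Suc d)
  define S where "S = (\<Sum>k\<le>d. w (Suc k) * a ^ (d - k))"
  have split: "(\<Sum>k\<le>Suc d. w k * a ^ (Suc d - k)) = w 0 * a ^ Suc d + S"
    unfolding S_def by (subst sum.atMost_Suc_shift) simp
  have "a ^ Suc d dvd a ^ Suc (Suc d)" by (rule le_imp_power_dvd) simp
  then have "a ^ Suc d dvd w 0 * a ^ Suc d + S"
    using Suc.prems split by (metis dvd_trans)
  then have "a ^ Suc d dvd S" by (simp add: dvd_add_right_iff)
  then obtain c' where c'_end: "c' (Suc d) = 0"
    and c'_rec: "\<forall>k\<le>d. c' (Suc k) - a * c' k = w (Suc k)"
    using Suc.IH[of "\<lambda>k. w (Suc k)"] unfolding S_def by blast
  have "S = (\<Sum>k\<le>d. (c' (Suc k) - a * c' k) * a ^ (d - k))"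
    unfolding S_def using c'_rec by (intro sum.cong) auto
  then have S_eq: "S = - (c' 0 * a ^ Suc d)"
    by (simp add: telescope_recurrence c'_end)
  obtain r where "w 0 * a ^ Suc d + S = a ^ Suc (Suc d) * r"
    using Suc.prems split by (auto elim: dvdE)
  then have "a ^ Suc d * (w 0 - c' 0) = a ^ Suc d * (a * r)"
    by (simp add: S_eq algebra_simps)
  then have "w 0 - c' 0 = a * r" by (rule power_mult_cancel[OF nzd])
  then have w0: "c' 0 - a * (- r) = w 0" by (simp add: algebra_simps)
  define c where "c k = (case k of 0 \<Rightarrow> - r | Suc j \<Rightarrow> c' j)" for k
  have "c (Suc k) - a * c k = w k" if "k \<le> Suc d" for k
    using that w0 c'_rec by (cases k) (simp_all add: c_def)
  moreover have "c (Suc (Suc d)) = 0" by (simp add: c_def c'_end)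
  ultimately show ?case by blast
qed

lemma recurrence_iff_dvd:
  fixes a :: "'a::comm_ring_1"
  assumes nzd: "\<forall>c. a * c = 0 \<longrightarrow> c = 0"
  shows "(\<exists>c. c (Suc d) = 0 \<and> (\<forall>k\<le>d. c (Suc k) - a * c k = w k))
           \<longleftrightarrow> a ^ Suc d dvd (\<Sum>k\<le>d. w k * a ^ (d - k))"
proof
  assume "\<exists>c. c (Suc d) = 0 \<and> (\<forall>k\<le>d. c (Suc k) - a * c k = w k)"
  then obtain c where c_end: "c (Suc d) = 0" and c_rec: "\<forall>k\<le>d. c (Suc k) - a * c k = w k"
    by blast
  have "(\<Sum>k\<le>d. w k * a ^ (d - k)) = (\<Sum>k\<le>d. (c (Suc k) - a * c k) * a ^ (d - k))"
    using c_rec by (intro sum.cong) auto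
  also have "\<dots> = - (c 0 * a ^ Suc d)"
    by (simp add: telescope_recurrence c_end)
  finally show "a ^ Suc d dvd (\<Sum>k\<le>d. w k * a ^ (d - k))" by simp
qed (rule dvd_imp_recurrence[OF nzd])

lemma Dop_preimage_imp_recurrence:
  fixes a :: "'a::comm_ring_1"
  assumes nzd: "\<forall>c. a * c = 0 \<longrightarrow> c = 0" and deg: "degree f \<le> d" and f: "f = Dop a h"
  shows "\<exists>c. c (Suc d) = 0 \<and> (\<forall>k\<le>d. c (Suc k) - a * c k = of_nat (fact k) * coeff f k)"
proof -
  have "degree h \<le> d" using deg f degree_Dop[OF nzd] by simp
  then have "coeff h (Suc d) = 0" by (simp add: coeff_eq_0)
  then show ?thesis
    using f fact_scaled_coeff_Dop[of _ a h]
    by (intro exI[of _ "\<lambda>k. of_nat (fact k) * coeff h k"]) simp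
qed

lemma recurrence_imp_Dop_preimage:
  fixes a :: "'a::comm_ring_1"
  assumes units: "\<forall>k\<le>d. \<exists>u. u * of_nat (fact k) = (1::'a)" and deg: "degree f \<le> d"
    and c_end: "c (Suc d) = 0"
    and c_rec: "\<forall>k\<le>d. c (Suc k) - a * c k = of_nat (fact k) * coeff f k"
  shows "f \<in> range (Dop a)"
proof -
  obtain u where u: "\<forall>k\<le>d. u k * of_nat (fact k) = (1::'a)"
    using units by metis
  define h where "h = (\<Sum>k\<le>d. monom (u k * c k) k)"
  have coeff_h: "coeff h k = (if k \<le> d then u k * c k else 0)" for k
    unfolding h_def by (simp add: coeff_sum coeff_monom)
  have scaled_h: "of_nat (fact k) * coeff h k = c k" if "k \<le> Suc d" for k
    using that u c_end by (auto simp: coeff_h le_Suc_eq algebra_simps)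
  have "coeff (Dop a h) k = coeff f k" for k
  proof (cases "k \<le> d")
    case True
    have "of_nat (fact k) * coeff (Dop a h) k = of_nat (fact k) * coeff f k"
      using True c_rec scaled_h[of k] scaled_h[of "Suc k"]
      by (simp add: fact_scaled_coeff_Dop[of k a h] del: of_nat_fact)
    then have "u k * (of_nat (fact k) * coeff (Dop a h) k) = u k * (of_nat (fact k) * coeff f k)"
      by simp
    then show ?thesis using u True by (simp add: mult.assoc[symmetric])
  next
    case False
    then show ?thesis using deg by (simp add: coeff_Dop coeff_h coeff_eq_0)
  qed
  then have "Dop a h = f" by (rule poly_eqI)
  then show ?thesis by blast
qed

lemma dvd_top_coeff_Dop:
  fixes a :: "'a::comm_ring_1"
  assumes nzd: "\<forall>c. a * c = 0 \<longrightarrow> c = 0" and deg: "degree (Dop a h) \<le> d"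
  shows "a dvd coeff (Dop a h) d"
proof -
  have "coeff h (Suc d) = 0" using deg degree_Dop[OF nzd] by (simp add: coeff_eq_0)
  then show ?thesis by (simp add: coeff_Dop)
qed

lemma Q_algebra_of_nat_unit:
  assumes "Q_algebra TYPE('a::comm_ring_1)" and "n > 0"
  shows "\<exists>u::'a. u * of_nat n = 1"
proof -
  obtain \<phi> :: "rat \<Rightarrow> 'a" where one: "\<phi> 1 = 1" and add: "\<forall>x y. \<phi> (x + y) = \<phi> x + \<phi> y"
    and mult: "\<forall>x y. \<phi> (x * y) = \<phi> x * \<phi> y"
    using assms(1) unfolding Q_algebra_def by blast
  have zero: "\<phi> 0 = 0" using add[rule_format, of 0 0] by simp
  have of_nat: "\<phi> (of_nat m) = of_nat m" for m
    by (induction m) (simp_all add: zero add one)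
  have "\<phi> (1 / of_nat n) * \<phi> (of_nat n) = 1"
    using mult[rule_format, of "1 / of_nat n" "of_nat n"] one assms(2) by simp
  then show ?thesis using of_nat by metis
qed

lemma Fp_algebra_of_nat_unit:
  assumes "Fp_algebra TYPE('a::comm_ring_1) p" and "\<not> p dvd n"
  shows "\<exists>u::'a. u * of_nat n = 1"
proof -
  have p: "prime p" and p_zero: "(of_nat p :: 'a) = 0"
    using assms(1) unfolding Fp_algebra_def by auto
  have "coprime (int n) (int p)"
    using p assms(2) prime_imp_coprime by (metis coprime_commute coprime_int_iff)
  then obtain s t where "s * int n + t * int p = 1"
    using bezout_int[of "int n" "int p"] by auto
  then have "of_int (s * int n + t * int p) = (1::'a)" by simp
  then have "of_int s * of_nat n = (1::'a)" using p_zero by simp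
  then show ?thesis by blast
qed

text \<open>Under the hypotheses of part (ii), 0!, ..., d! are units (p does not divide k! for k < p).\<close>
lemma fact_unit:
  assumes "Q_algebra TYPE('a::comm_ring_1) \<or> (\<exists>p. Fp_algebra TYPE('a) p \<and> d < p)"
    and "k \<le> d"
  shows "\<exists>u::'a. u * of_nat (fact k) = 1"
  using assms(1)
proof
  assume "Q_algebra TYPE('a)"
  then show ?thesis by (rule Q_algebra_of_nat_unit) simp
next
  assume "\<exists>p. Fp_algebra TYPE('a) p \<and> d < p"
  then obtain p where Fp: "Fp_algebra TYPE('a) p" and "d < p" by blast
  then have "\<not> p dvd fact k"
    using prime_dvd_fact_iff assms(2) unfolding Fp_algebra_def by auto
  with Fp show ?thesis by (rule Fp_algebra_of_nat_unit)
qed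

theorem proposition2p10:
  fixes a :: "'a::comm_ring_1" and b :: "nat \<Rightarrow> 'a" and d :: nat and f :: "'a poly"
  assumes nzd: "\<forall>c. a * c = 0 \<longrightarrow> c = 0"
    and f_def: "f = (\<Sum>j\<le>d. monom (b j) j)"
  shows "(f \<in> range (Dop a) \<longrightarrow>
            a dvd b d \<and>
            a ^ (d + 1) dvd (\<Sum>j\<le>d. of_nat (fact (d - j)) * b (d - j) * a ^ j))
       \<and> ((Q_algebra TYPE('a) \<or> (\<exists>p. Fp_algebra TYPE('a) p \<and> d < p)) \<longrightarrow>
            a ^ (d + 1) dvd (\<Sum>j\<le>d. of_nat (fact (d - j)) * b (d - j) * a ^ j) \<longrightarrow>
            f \<in> range (Dop a))"
proof -
  have coeff_f: "coeff f k = (if k \<le> d then b k else 0)" for k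
    unfolding f_def by (simp add: coeff_sum coeff_monom)
  have deg: "degree f \<le> d" by (rule degree_le) (simp add: coeff_f)
  have "(\<Sum>j\<le>d. of_nat (fact (d - j)) * b (d - j) * a ^ j)
      = (\<Sum>k\<le>d. of_nat (fact k) * coeff f k * a ^ (d - k))"
    by (rule sum.reindex_bij_witness[of _ "\<lambda>k. d - k" "\<lambda>k. d - k"]) (auto simp: coeff_f)
  then have congruence_iff_recurrence: "a ^ (d + 1) dvd (\<Sum>j\<le>d. of_nat (fact (d - j)) * b (d - j) * a ^ j)
      \<longleftrightarrow> (\<exists>c. c (Suc d) = 0 \<and> (\<forall>k\<le>d. c (Suc k) - a * c k = of_nat (fact k) * coeff f k))"
    using recurrence_iff_dvd[OF nzd] by simp
  have "a dvd b d \<and> a ^ (d + 1) dvd (\<Sum>j\<le>d. of_nat (fact (d - j)) * b (d - j) * a ^ j)"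
    if preimage: "f = Dop a h" for h
  proof
    have "a dvd coeff (Dop a h) d" using deg preimage by (intro dvd_top_coeff_Dop[OF nzd]) simp
    then show "a dvd b d" using preimage coeff_f[of d] by simp
    show "a ^ (d + 1) dvd (\<Sum>j\<le>d. of_nat (fact (d - j)) * b (d - j) * a ^ j)"
      using Dop_preimage_imp_recurrence[OF nzd deg preimage] congruence_iff_recurrence by blast
  qed
  moreover have "f \<in> range (Dop a)"
    if alg: "Q_algebra TYPE('a) \<or> (\<exists>p. Fp_algebra TYPE('a) p \<and> d < p)"
      and congruence: "a ^ (d + 1) dvd (\<Sum>j\<le>d. of_nat (fact (d - j)) * b (d - j) * a ^ j)"
  proof -
    obtain c where "c (Suc d) = 0" "\<forall>k\<le>d. c (Suc k) - a * c k = of_nat (fact k) * coeff f k"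
      using congruence congruence_iff_recurrence by blast
    moreover have "\<forall>k\<le>d. \<exists>u. u * of_nat (fact k) = (1::'a)" using fact_unit[OF alg] by blast
    ultimately show ?thesis using recurrence_imp_Dop_preimage deg by blast
  qed
  ultimately show ?thesis by blast
qed

end
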